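(* Let $\mathcal{X}=\sum_{k=1}^r\beta_k\bigcirc_{\ell=1}^d\mathbf{y}^{(\ell)}_k$ and $\mathcal{Y}=\sum_{k=1}^r\alpha_k\bigcirc_{\ell=1}^d\mathbf{y}^{(\ell)}_k$ be tensors in $\mathbb{C}^{n_1\times\cdots\times n_d}$ in standard form with the same unit vectors $\mathbf{y}^{(\ell)}_k$. Let $\epsilon\in(0,3/4]$ and for each $j\in[d]$ let $\mathbf{A}_j\in\mathbb{C}^{m_j\times n_j}$ be an $(\epsilon/4d)$-JL embedding into $\mathbb{C}^{m_j}$ of $$\mathcal{S}'_j:=\Big(\bigcup_{1\le h<k\le r}\{\mathbf{y}^{(j)}_k-\mathbf{y}^{(j)}_h,\ \mathbf{y}^{(j)}_k+\mathbf{y}^{(j)}_h,\ \mathbf{y}^{(j)}_k-\mathrm{i}\,\mathbf{y}^{(j)}_h,\ \mathbf{y}^{(j)}_k+\mathrm{i}\,\mathbf{y}^{(j)}_h\}\Big)\cup\{\mathbf{y}^{(j)}_k\}_{k\in[r]}.$$ Define $$\epsilon':=\begin{cases}\big(\epsilon+e\sqrt{r(r-1)}\,\epsilon^d\big)e & \text{if }\mu_{\mathcal{Y}}=0,\\ \epsilon\big(e+e^2\sqrt{r(r-1)}\max(\epsilon^{d-1},\mu_{\mathcal{Y}}^{d-1})\big)&\text{otherwise.}\end{cases}$$ Then, writing $\mathcal{Z}\times_{j=1}^d\mathbf{A}_j:=\mathcal{Z}\times_1\mathbf{A}_1\cdots\times_d\mathbf{A}_d$, $$\big|\langle\mathcal{X}\times_{j=1}^d\mathbf{A}_j,\mathcal{Y}\times_{j=1}^d\mathbf{A}_j\rangle-\langle\mathcal{X},\mathcal{Y}\rangle\big|\le2\epsilon'(\|\boldsymbol\beta\|_2^2+\|\boldsymbol\alpha\|_2^2)\le4\epsilon'\max\{\|\boldsymbol\beta\|_2^2,\|\boldsymbol\alpha\|_2^2\},$$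 and, if moreover $\mu'_{\mathcal{Y}}<(r-1)^{-1}$, the last quantity is at most $4\epsilon'\frac{\max\{\|\mathcal{X}\|^2,\|\mathcal{Y}\|^2\}}{1-(r-1)\mu'_{\mathcal{Y}}}$.
   Context: Tensors carry the inner product $\langle\mathcal{X},\mathcal{Y}\rangle=\sum\mathcal{X}_{i_1\dots i_d}\overline{\mathcal{Y}_{i_1\dots i_d}}$ and norm $\|\cdot\|$; $\bigcirc$ is the outer product; $(\mathcal{Z}\times_j\mathbf{U})_{i_1,\dots,\ell,\dots,i_d}=\sum_{i_j}\mathcal{Z}_{i_1,\dots,i_j,\dots,i_d}\mathbf{U}_{\ell,i_j}$; $\mathrm{i}$ is the imaginary unit, $e$ Euler's number. Standard form means $\|\mathbf{y}^{(\ell)}_k\|_2=1$ for all $\ell,k$. A matrix $\mathbf{A}$ is an $\epsilon$-JL embedding of $S$ if $\|\mathbf{A}x\|_2^2=(1+\epsilon_x)\|x\|_2^2$ with $\epsilon_x\in(-\epsilon,\epsilon)$ for all $x\in S$. Relative to the vectors $\mathbf{y}^{(\ell)}_k$: $\mu_{\mathcal{Y}}=\max_{\ell\in[d]}\max_{k\ne h}|\langle\mathbf{y}^{(\ell)}_k,\mathbf{y}^{(\ell)}_h\rangle|$ and $\mu'_{\mathcal{Y}}=\max_{k\ne h}\prod_{\ell=1}^d|\langle\mathbf{y}^{(\ell)}_k,\mathbf{y}^{(\ell)}_h\rangle|$. *)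

theory Defs
  imports "HOL-Analysis.Analysis"
begin

(* Conventions: tensor order d, modes indexed 0..d-1; mode l has size n l.
   A tensor is a function (nat \<Rightarrow> nat) \<Rightarrow> complex; only its values on the
   index set matter.  Vectors of C^N are functions nat \<Rightarrow> complex (entries 0..N-1);
   matrices in C^{m x N} are functions nat \<Rightarrow> nat \<Rightarrow> complex (row, column). *)

definition tidx :: "nat \<Rightarrow> (nat \<Rightarrow> nat) \<Rightarrow> (nat \<Rightarrow> nat) set" where
  "tidx d n = PiE {..<d} (\<lambda>l. {..<n l})"

definition tinner :: "nat \<Rightarrow> (nat \<Rightarrow> nat) \<Rightarrow> ((nat \<Rightarrow> nat) \<Rightarrow> complex)
     \<Rightarrow> ((nat \<Rightarrow> nat) \<Rightarrow> complex) \<Rightarrow> complex" where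
  "tinner d n X Y = (\<Sum>i\<in>tidx d n. X i * cnj (Y i))"

definition tnorm2 :: "nat \<Rightarrow> (nat \<Rightarrow> nat) \<Rightarrow> ((nat \<Rightarrow> nat) \<Rightarrow> complex) \<Rightarrow> real" where
  "tnorm2 d n X = (\<Sum>i\<in>tidx d n. (cmod (X i))\<^sup>2)"

definition cp_tensor :: "nat \<Rightarrow> nat \<Rightarrow> (nat \<Rightarrow> complex) \<Rightarrow> (nat \<Rightarrow> nat \<Rightarrow> nat \<Rightarrow> complex)
     \<Rightarrow> (nat \<Rightarrow> nat) \<Rightarrow> complex" where
  "cp_tensor d r c y = (\<lambda>i. \<Sum>k<r. c k * (\<Prod>l<d. y l k (i l)))"

definition mode_prod :: "nat \<Rightarrow> nat \<Rightarrow> (nat \<Rightarrow> nat \<Rightarrow> complex)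
     \<Rightarrow> ((nat \<Rightarrow> nat) \<Rightarrow> complex) \<Rightarrow> (nat \<Rightarrow> nat) \<Rightarrow> complex" where
  "mode_prod nj j U Z = (\<lambda>i. \<Sum>t<nj. Z (i(j := t)) * U (i j) t)"

text \<open>Z x_1 A_1 ... x_k A_k (modes 0..k-1 in 0-based indexing).\<close>
fun multi_mode_prod :: "(nat \<Rightarrow> nat) \<Rightarrow> (nat \<Rightarrow> nat \<Rightarrow> nat \<Rightarrow> complex) \<Rightarrow> nat
     \<Rightarrow> ((nat \<Rightarrow> nat) \<Rightarrow> complex) \<Rightarrow> (nat \<Rightarrow> nat) \<Rightarrow> complex" where
  "multi_mode_prod n A 0 Z = Z"
| "multi_mode_prod n A (Suc j) Z = mode_prod (n j) j (A j) (multi_mode_prod n A j Z)"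

definition vnorm2 :: "nat \<Rightarrow> (nat \<Rightarrow> complex) \<Rightarrow> real" where
  "vnorm2 N x = (\<Sum>t<N. (cmod (x t))\<^sup>2)"

definition vinner :: "nat \<Rightarrow> (nat \<Rightarrow> complex) \<Rightarrow> (nat \<Rightarrow> complex) \<Rightarrow> complex" where
  "vinner N x y = (\<Sum>t<N. x t * cnj (y t))"

definition mat_vec :: "nat \<Rightarrow> (nat \<Rightarrow> nat \<Rightarrow> complex) \<Rightarrow> (nat \<Rightarrow> complex) \<Rightarrow> nat \<Rightarrow> complex" where
  "mat_vec N A x = (\<lambda>a. \<Sum>b<N. A a b * x b)"

definition is_JL :: "real \<Rightarrow> nat \<Rightarrow> nat \<Rightarrow> (nat \<Rightarrow> nat \<Rightarrow> complex) \<Rightarrow> (nat \<Rightarrow> complex) set \<Rightarrow> bool" where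
  "is_JL eps m N A S \<longleftrightarrow> (\<forall>x\<in>S. \<exists>ex. -eps < ex \<and> ex < eps \<and>
      vnorm2 m (mat_vec N A x) = (1 + ex) * vnorm2 N x)"

definition S_prime :: "nat \<Rightarrow> (nat \<Rightarrow> nat \<Rightarrow> complex) \<Rightarrow> (nat \<Rightarrow> complex) set" where
  "S_prime r y = (\<Union>k<r. \<Union>h<k. {\<lambda>t. y k t - y h t, \<lambda>t. y k t + y h t,
       \<lambda>t. y k t - \<i> * y h t, \<lambda>t. y k t + \<i> * y h t}) \<union> {y k | k. k < r}"

text \<open>Coherences; maxima over empty sets are taken to be 0.\<close>
definition mu_Y :: "nat \<Rightarrow> (nat \<Rightarrow> nat) \<Rightarrow> nat \<Rightarrow> (nat \<Rightarrow> nat \<Rightarrow> nat \<Rightarrow> complex) \<Rightarrow> real" where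
  "mu_Y d n r y = Max (insert 0 {cmod (vinner (n l) (y l k) (y l h)) | l k h. l < d \<and> k < r \<and> h < r \<and> k \<noteq> h})"

definition mu'_Y :: "nat \<Rightarrow> (nat \<Rightarrow> nat) \<Rightarrow> nat \<Rightarrow> (nat \<Rightarrow> nat \<Rightarrow> nat \<Rightarrow> complex) \<Rightarrow> real" where
  "mu'_Y d n r y = Max (insert 0 {(\<Prod>l<d. cmod (vinner (n l) (y l k) (y l h))) | k h. k < r \<and> h < r \<and> k \<noteq> h})"

end

theory Submission
  imports Defs
begin

text \<open>
  Both tensors are built from the same unit factors, so their inner product is
  sum_{k,h} \<beta>_k cnj(\<alpha>_h) prod_l G_l(k,h) with the factor Gram entries G_l(k,h) = <y_k^(l), y_h^(l)>,
  and the mode products merely replace every factor y_k^(l) by A_l y_k^(l). By polarization, a JL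
  embedding of S'_l with distortion \<epsilon>/4d moves every Gram entry by at most \<epsilon>/2d. A product of d
  entries then moves by at most (\<epsilon>/2) e on the diagonal, where the entries are 1, and by at most
  (\<epsilon>/2) e max(\<epsilon>, \<mu>)^(d-1) off the diagonal, where they are bounded by \<mu>. Summing over the r
  diagonal and r(r-1) off-diagonal pairs with |\<beta>_k| |\<alpha>_h| <= (|\<beta>_k|^2 + |\<alpha>_h|^2)/2 gives the
  first bound. The last one comes from the same Gram expansion of ||X||^2, whose off-diagonal part is
  at most (r-1) \<mu>' ||\<beta>||^2 in absolute value.
\<close>

subsection \<open>Polarization and JL embeddings\<close>

lemma mat_vec_add_scaled:
  "mat_vec N B (\<lambda>t. u t + c * v t) = (\<lambda>a. mat_vec N B u a + c * mat_vec N B v a)"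
  unfolding mat_vec_def by (simp add: sum.distrib sum_distrib_left algebra_simps)

lemma mat_vec_diff_scaled:
  "mat_vec N B (\<lambda>t. u t - c * v t) = (\<lambda>a. mat_vec N B u a - c * mat_vec N B v a)"
  unfolding mat_vec_def by (simp add: sum_subtractf sum_distrib_left algebra_simps)

lemma vnorm2_nonneg: "0 \<le> vnorm2 N u"
  unfolding vnorm2_def by (simp add: sum_nonneg)

lemma vinner_self: "vinner N u u = complex_of_real (vnorm2 N u)"
  unfolding vinner_def vnorm2_def by (simp only: of_real_sum complex_norm_square)

lemma cnj_vinner: "cnj (vinner N u v) = vinner N v u"
  unfolding vinner_def by (simp add: cnj_sum mult.commute)

lemma vinner_polarization:
  "4 * vinner N u v =
     complex_of_real (vnorm2 N (\<lambda>t. u t + v t) - vnorm2 N (\<lambda>t. u t - v t))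
   + \<i> * complex_of_real (vnorm2 N (\<lambda>t. u t + \<i> * v t) - vnorm2 N (\<lambda>t. u t - \<i> * v t))"
proof -
  have "4 * (x * cnj y) =
      complex_of_real ((cmod (x + y))\<^sup>2 - (cmod (x - y))\<^sup>2)
    + \<i> * complex_of_real ((cmod (x + \<i> * y))\<^sup>2 - (cmod (x - \<i> * y))\<^sup>2)" for x y :: complex
    by (simp only: cmod_power2) (simp add: complex_eq_iff power2_eq_square algebra_simps)
  then show ?thesis
    unfolding vinner_def vnorm2_def
    by (simp add: sum_distrib_left sum.distrib sum_subtractf of_real_sum right_diff_distrib)
qed

lemma vnorm2_parallelogram:
  assumes "cmod c = 1"
  shows "vnorm2 N (\<lambda>t. u t + c * v t) + vnorm2 N (\<lambda>t. u t - c * v t) = 2 * vnorm2 N u + 2 * vnorm2 N v"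
proof -
  have "(cmod (x + c * y))\<^sup>2 + (cmod (x - c * y))\<^sup>2 = 2 * (cmod x)\<^sup>2 + 2 * (cmod y)\<^sup>2" for x y
  proof -
    have "(cmod (x + c * y))\<^sup>2 + (cmod (x - c * y))\<^sup>2 = 2 * (cmod x)\<^sup>2 + 2 * (cmod (c * y))\<^sup>2"
      by (simp only: cmod_power2) (simp add: power2_eq_square algebra_simps)
    then show ?thesis by (simp add: norm_mult assms)
  qed
  then show ?thesis
    unfolding vnorm2_def by (simp add: sum_distrib_left flip: sum.distrib)
qed

lemma is_JL_distortion:
  assumes "is_JL e M N B S" "x \<in> S"
  shows "\<bar>vnorm2 M (mat_vec N B x) - vnorm2 N x\<bar> \<le> e * vnorm2 N x"
proof -
  obtain ex where ex: "-e < ex" "ex < e" "vnorm2 M (mat_vec N B x) = (1 + ex) * vnorm2 N x"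
    using assms unfolding is_JL_def by blast
  then have "\<bar>vnorm2 M (mat_vec N B x) - vnorm2 N x\<bar> = \<bar>ex\<bar> * vnorm2 N x"
    by (simp add: algebra_simps abs_mult vnorm2_nonneg)
  also have "\<dots> \<le> e * vnorm2 N x"
    using ex by (intro mult_right_mono) (auto simp: vnorm2_nonneg)
  finally show ?thesis .
qed

lemma is_JL_vinner_error:
  assumes JL: "is_JL e M N B S"
    and S: "(\<lambda>t. u t + v t) \<in> S" "(\<lambda>t. u t - v t) \<in> S"
      "(\<lambda>t. u t + \<i> * v t) \<in> S" "(\<lambda>t. u t - \<i> * v t) \<in> S"
  shows "cmod (vinner M (mat_vec N B u) (mat_vec N B v) - vinner N u v)
    \<le> e * (vnorm2 N u + vnorm2 N v)"
proof -
  define \<delta> where "\<delta> x = vnorm2 M (mat_vec N B x) - vnorm2 N x" for x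
  let ?s1 = "vnorm2 N (\<lambda>t. u t + v t)" and ?s2 = "vnorm2 N (\<lambda>t. u t - v t)"
  let ?s3 = "vnorm2 N (\<lambda>t. u t + \<i> * v t)" and ?s4 = "vnorm2 N (\<lambda>t. u t - \<i> * v t)"
  have "4 * (vinner M (mat_vec N B u) (mat_vec N B v) - vinner N u v) =
      complex_of_real (\<delta> (\<lambda>t. u t + v t) - \<delta> (\<lambda>t. u t - v t))
    + \<i> * complex_of_real (\<delta> (\<lambda>t. u t + \<i> * v t) - \<delta> (\<lambda>t. u t - \<i> * v t))"
    using mat_vec_add_scaled[of N B u 1 v] mat_vec_diff_scaled[of N B u 1 v]
      mat_vec_add_scaled[of N B u \<i> v] mat_vec_diff_scaled[of N B u \<i> v]
    unfolding right_diff_distrib vinner_polarization \<delta>_def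
    by (simp add: algebra_simps)
  then have "4 * cmod (vinner M (mat_vec N B u) (mat_vec N B v) - vinner N u v)
      = cmod (complex_of_real (\<delta> (\<lambda>t. u t + v t) - \<delta> (\<lambda>t. u t - v t))
        + \<i> * complex_of_real (\<delta> (\<lambda>t. u t + \<i> * v t) - \<delta> (\<lambda>t. u t - \<i> * v t)))"
    by (metis norm_mult norm_numeral)
  also have "\<dots> \<le> \<bar>\<delta> (\<lambda>t. u t + v t) - \<delta> (\<lambda>t. u t - v t)\<bar>
        + \<bar>\<delta> (\<lambda>t. u t + \<i> * v t) - \<delta> (\<lambda>t. u t - \<i> * v t)\<bar>"
    by (rule order.trans[OF norm_triangle_ineq]) (simp only: norm_mult norm_of_real, simp)
  also have "\<dots> \<le> \<bar>\<delta> (\<lambda>t. u t + v t)\<bar> + \<bar>\<delta> (\<lambda>t. u t - v t)\<bar>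
        + (\<bar>\<delta> (\<lambda>t. u t + \<i> * v t)\<bar> + \<bar>\<delta> (\<lambda>t. u t - \<i> * v t)\<bar>)"
    by (intro add_mono abs_triangle_ineq4)
  also have "\<dots> \<le> e * ?s1 + e * ?s2 + (e * ?s3 + e * ?s4)"
    unfolding \<delta>_def by (intro add_mono is_JL_distortion[OF JL] S)
  also have "\<dots> = e * ((?s1 + ?s2) + (?s3 + ?s4))"
    by (simp only: distrib_left)
  also have "\<dots> = 4 * (e * (vnorm2 N u + vnorm2 N v))"
    using vnorm2_parallelogram[of 1 N u v] vnorm2_parallelogram[of \<i> N u v] by simp
  finally show ?thesis by simp
qed

lemma S_prime_gram_error:
  assumes JL: "is_JL e M N B (S_prime r y)"
    and unit: "\<And>k. k < r \<Longrightarrow> vnorm2 N (y k) = 1"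
    and "k < r" "h < r"
  shows "cmod (vinner M (mat_vec N B (y k)) (mat_vec N B (y h)) - vinner N (y k) (y h)) \<le> 2 * e"
proof -
  have pair: "cmod (vinner M (mat_vec N B (y k)) (mat_vec N B (y h)) - vinner N (y k) (y h)) \<le> 2 * e"
    if "h < k" "k < r" for k h
  proof -
    have "cmod (vinner M (mat_vec N B (y k)) (mat_vec N B (y h)) - vinner N (y k) (y h))
        \<le> e * (vnorm2 N (y k) + vnorm2 N (y h))"
      by (rule is_JL_vinner_error[OF JL]) (use that in \<open>auto simp: S_prime_def\<close>)
    then show ?thesis using that unit by simp
  qed
  \<comment> \<open>\<open>S_prime\<close> only contains the combinations with \<open>h < k\<close>; the case \<open>k < h\<close> follows by conjugate symmetry.\<close>
  consider "h < k" | "k < h" | "k = h" by linarith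
  then show ?thesis
  proof cases
    case 1
    then show ?thesis using pair \<open>k < r\<close> by blast
  next
    case 2
    then show ?thesis
      using pair[of k h] \<open>h < r\<close>
      by (metis complex_cnj_diff complex_mod_cnj cnj_vinner)
  next
    case 3
    have "y k \<in> S_prime r y" using \<open>k < r\<close> unfolding S_prime_def by blast
    then have "\<bar>vnorm2 M (mat_vec N B (y k)) - 1\<bar> \<le> e"
      using is_JL_distortion[OF JL] unit[OF \<open>k < r\<close>] by (metis mult.right_neutral)
    moreover have "vinner M (mat_vec N B (y k)) (mat_vec N B (y h)) - vinner N (y k) (y h)
        = complex_of_real (vnorm2 M (mat_vec N B (y k)) - 1)"
      using 3 unit[OF \<open>k < r\<close>] by (simp add: vinner_self)
    ultimately show ?thesis
      by (simp del: of_real_diff)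
  qed
qed

subsection \<open>Mode products and inner products of CP tensors\<close>

lemma tinner_cp_tensor:
  "tinner d N (cp_tensor d r b z) (cp_tensor d r a z) =
   (\<Sum>k<r. \<Sum>h<r. b k * cnj (a h) * (\<Prod>l<d. vinner (N l) (z l k) (z l h)))"
proof -
  have prod_vinner: "(\<Prod>l<d. vinner (N l) (z l k) (z l h)) =
      (\<Sum>i\<in>tidx d N. \<Prod>l<d. z l k (i l) * cnj (z l h (i l)))" for k h
    unfolding vinner_def tidx_def by (rule prod_sum_PiE) auto
  have "tinner d N (cp_tensor d r b z) (cp_tensor d r a z) =
      (\<Sum>i\<in>tidx d N. \<Sum>k<r. \<Sum>h<r. b k * cnj (a h) * (\<Prod>l<d. z l k (i l) * cnj (z l h (i l))))"
    unfolding tinner_def cp_tensor_def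
    by (simp add: sum_product cnj_sum cnj_prod prod.distrib mult_ac)
  also have "\<dots> = (\<Sum>k<r. \<Sum>h<r. b k * cnj (a h) * (\<Prod>l<d. vinner (N l) (z l k) (z l h)))"
    by (simp add: prod_vinner sum_distrib_left sum.swap[of _ "tidx d N"])
  finally show ?thesis .
qed

lemma mode_prod_cp_tensor:
  assumes "j < d"
  shows "mode_prod (n j) j U (cp_tensor d r c z) =
    cp_tensor d r c (z(j := (\<lambda>k. mat_vec (n j) U (z j k))))"
proof
  fix i
  let ?z' = "z(j := (\<lambda>k. mat_vec (n j) U (z j k)))"
  have split: "(\<Prod>l<d. f l) = f j * (\<Prod>l\<in>{..<d}-{j}. f l)" for f :: "nat \<Rightarrow> complex"
    using assms by (simp add: prod.remove)
  have other_modes: "(\<Prod>l\<in>{..<d}-{j}. z l k ((i(j := t)) l)) = (\<Prod>l\<in>{..<d}-{j}. z l k (i l))"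
    for k t by (rule prod.cong) auto
  have updated_mode: "(\<Prod>l\<in>{..<d}-{j}. (z(j := w)) l k (i l)) = (\<Prod>l\<in>{..<d}-{j}. z l k (i l))"
    for w k by (rule prod.cong) auto
  have "mode_prod (n j) j U (cp_tensor d r c z) i =
      (\<Sum>t<n j. \<Sum>k<r. c k * (z j k t * U (i j) t) * (\<Prod>l\<in>{..<d}-{j}. z l k (i l)))"
    unfolding mode_prod_def cp_tensor_def
    by (subst split) (simp add: other_modes sum_distrib_left sum_distrib_right mult_ac)
  also have "\<dots> = cp_tensor d r c ?z' i"
    unfolding cp_tensor_def mat_vec_def
    by (subst split, subst sum.swap) (simp add: updated_mode sum_distrib_left sum_distrib_right mult_ac)
  finally show "mode_prod (n j) j U (cp_tensor d r c z) i = cp_tensor d r c ?z' i" .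
qed

lemma multi_mode_prod_cp_tensor_prefix:
  "j \<le> d \<Longrightarrow> multi_mode_prod n A j (cp_tensor d r c y) =
     cp_tensor d r c (\<lambda>l k. if l < j then mat_vec (n l) (A l) (y l k) else y l k)"
proof (induction j)
  case 0
  then show ?case by simp
next
  case (Suc j)
  have "(\<lambda>l k. if l < j then mat_vec (n l) (A l) (y l k) else y l k)(j := \<lambda>k. mat_vec (n j) (A j) (y j k))
      = (\<lambda>l k. if l < Suc j then mat_vec (n l) (A l) (y l k) else y l k)"
    by (auto simp: fun_eq_iff less_Suc_eq)
  with Suc show ?case
    by (simp add: mode_prod_cp_tensor)
qed

lemma multi_mode_prod_cp_tensor:
  "multi_mode_prod n A d (cp_tensor d r c y) = cp_tensor d r c (\<lambda>l k. mat_vec (n l) (A l) (y l k))"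
  by (simp only: multi_mode_prod_cp_tensor_prefix[OF order_refl]) (simp add: cp_tensor_def)

subsection \<open>Perturbation and summation estimates\<close>

lemma norm_prod_diff_le:
  fixes a b :: "nat \<Rightarrow> complex"
  assumes "\<And>l. l < d \<Longrightarrow> cmod (a l) \<le> B" "\<And>l. l < d \<Longrightarrow> cmod (b l - a l) \<le> \<eta>"
    and "0 \<le> B" "0 \<le> \<eta>"
  shows "cmod ((\<Prod>l<d. b l) - (\<Prod>l<d. a l)) \<le> real d * \<eta> * (B + \<eta>) ^ (d - 1)"
  using assms(1,2)
proof (induction d)
  case 0
  then show ?case by simp
next
  case (Suc d)
  have IH: "cmod ((\<Prod>l<d. b l) - (\<Prod>l<d. a l)) \<le> real d * \<eta> * (B + \<eta>) ^ (d - 1)"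
    using Suc by simp
  have ad: "cmod (a d) \<le> B" and bad: "cmod (b d - a d) \<le> \<eta>"
    using Suc.prems by auto
  have bd: "cmod (b d) \<le> B + \<eta>"
    using ad bad norm_triangle_ineq[of "a d" "b d - a d"] by simp
  have "cmod (\<Prod>l<d. a l) = (\<Prod>l<d. cmod (a l))"
    by (simp add: prod_norm)
  also have "\<dots> \<le> (\<Prod>l<d. B)"
    using Suc.prems(1) by (intro prod_mono) auto
  finally have pa: "cmod (\<Prod>l<d. a l) \<le> B ^ d"
    by simp
  have "(\<Prod>l<Suc d. b l) - (\<Prod>l<Suc d. a l) =
      ((\<Prod>l<d. b l) - (\<Prod>l<d. a l)) * b d + (\<Prod>l<d. a l) * (b d - a d)"
    by (simp add: algebra_simps)
  then have "cmod ((\<Prod>l<Suc d. b l) - (\<Prod>l<Suc d. a l)) \<le>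
      cmod ((\<Prod>l<d. b l) - (\<Prod>l<d. a l)) * cmod (b d) + cmod (\<Prod>l<d. a l) * cmod (b d - a d)"
    by (metis norm_mult norm_triangle_ineq)
  also have "\<dots> \<le> real d * \<eta> * (B + \<eta>) ^ (d - 1) * (B + \<eta>) + (B + \<eta>) ^ d * \<eta>"
    using IH bd pa bad assms(3,4) power_mono[of B "B + \<eta>" d]
    by (intro add_mono mult_mono) auto
  also have "\<dots> = real (Suc d) * \<eta> * (B + \<eta>) ^ (Suc d - 1)"
    by (cases d) (simp_all add: algebra_simps)
  finally show ?case .
qed

lemma power_add_divide_le_exp_max:
  fixes B x :: real
  assumes "0 \<le> B" "0 \<le> x"
  shows "(B + x / real d) ^ (d - 1) \<le> exp 1 * max B x ^ (d - 1)"
proof (cases "d = 0")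
  case False
  let ?M = "max B x"
  have "(1 + 1 / real d) ^ (d - 1) \<le> exp (1 / real d) ^ (d - 1)"
    by (intro power_mono) (auto simp: exp_ge_add_one_self)
  also have "\<dots> = exp (real (d - 1) / real d)"
    by (simp add: exp_of_nat_mult[symmetric])
  also have "\<dots> \<le> exp 1"
    using False by simp
  finally have growth: "(1 + 1 / real d) ^ (d - 1) \<le> exp 1" .
  have "x / real d \<le> ?M / real d"
    by (simp add: divide_right_mono)
  then have "B + x / real d \<le> ?M * (1 + 1 / real d)"
    by (simp add: algebra_simps)
  then have "(B + x / real d) ^ (d - 1) \<le> (?M * (1 + 1 / real d)) ^ (d - 1)"
    by (rule power_mono) (use assms in auto)
  also have "\<dots> = ?M ^ (d - 1) * (1 + 1 / real d) ^ (d - 1)"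
    by (rule power_mult_distrib)
  also have "\<dots> \<le> ?M ^ (d - 1) * exp 1"
    using growth assms by (intro mult_left_mono) auto
  finally show ?thesis
    by (simp add: mult.commute)
qed simp

lemma mult_le_half_sum_squares:
  fixes u v :: real
  shows "u * v \<le> (u\<^sup>2 + v\<^sup>2) / 2"
  using sum_squares_bound[of u v] by simp

lemma sum_mult_le_sum_squares:
  fixes x y :: "nat \<Rightarrow> real"
  shows "(\<Sum>k<r. x k * y k) \<le> ((\<Sum>k<r. (x k)\<^sup>2) + (\<Sum>k<r. (y k)\<^sup>2)) / 2"
proof -
  have "(\<Sum>k<r. x k * y k) \<le> (\<Sum>k<r. ((x k)\<^sup>2 + (y k)\<^sup>2) / 2)"
    by (intro sum_mono mult_le_half_sum_squares)
  also have "\<dots> = ((\<Sum>k<r. (x k)\<^sup>2) + (\<Sum>k<r. (y k)\<^sup>2)) / 2"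
    by (simp add: sum.distrib flip: sum_divide_distrib)
  finally show ?thesis .
qed

lemma sum_offdiag_mult_le_sum_squares:
  fixes x y :: "nat \<Rightarrow> real"
  shows "(\<Sum>k<r. \<Sum>h\<in>{..<r}-{k}. x k * y h)
    \<le> (real r - 1) * ((\<Sum>k<r. (x k)\<^sup>2) + (\<Sum>k<r. (y k)\<^sup>2)) / 2"
proof -
  have row: "(\<Sum>h\<in>{..<r}-{k}. ((x k)\<^sup>2 + (y h)\<^sup>2) / 2)
      = ((real r - 1) * (x k)\<^sup>2 + ((\<Sum>h<r. (y h)\<^sup>2) - (y k)\<^sup>2)) / 2" if "k < r" for k
    using that by (simp add: sum.distrib sum_diff1 of_nat_diff flip: sum_divide_distrib)
  have "(\<Sum>k<r. \<Sum>h\<in>{..<r}-{k}. x k * y h) \<le> (\<Sum>k<r. \<Sum>h\<in>{..<r}-{k}. ((x k)\<^sup>2 + (y h)\<^sup>2) / 2)"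
    by (intro sum_mono mult_le_half_sum_squares)
  also have "\<dots> = (\<Sum>k<r. ((real r - 1) * (x k)\<^sup>2 + ((\<Sum>h<r. (y h)\<^sup>2) - (y k)\<^sup>2)) / 2)"
    by (intro sum.cong refl) (simp add: row)
  also have "\<dots> = (real r - 1) * ((\<Sum>k<r. (x k)\<^sup>2) + (\<Sum>k<r. (y k)\<^sup>2)) / 2"
    by (simp add: sum.distrib sum_distrib_left sum_subtractf algebra_simps flip: sum_divide_distrib)
  finally show ?thesis .
qed

lemma norm_bilinear_sum_le:
  fixes a b :: "nat \<Rightarrow> complex" and P :: "nat \<Rightarrow> nat \<Rightarrow> complex"
  assumes diag: "\<And>k. k < r \<Longrightarrow> cmod (P k k) \<le> D"
    and offdiag: "\<And>k h. k < r \<Longrightarrow> h < r \<Longrightarrow> k \<noteq> h \<Longrightarrow> cmod (P k h) \<le> E"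
    and "0 \<le> D" "0 \<le> E"
  shows "cmod (\<Sum>k<r. \<Sum>h<r. b k * cnj (a h) * P k h)
    \<le> (D + (real r - 1) * E) * ((\<Sum>k<r. (cmod (b k))\<^sup>2) + (\<Sum>k<r. (cmod (a k))\<^sup>2)) / 2"
proof -
  let ?S = "(\<Sum>k<r. (cmod (b k))\<^sup>2) + (\<Sum>k<r. (cmod (a k))\<^sup>2)"
  have "cmod (\<Sum>k<r. \<Sum>h<r. b k * cnj (a h) * P k h)
      \<le> (\<Sum>k<r. \<Sum>h<r. cmod (b k) * cmod (a h) * cmod (P k h))"
    by (auto intro!: order.trans[OF norm_sum] sum_mono simp: norm_mult)
  also have "\<dots> = (\<Sum>k<r. cmod (b k) * cmod (a k) * cmod (P k k)
      + (\<Sum>h\<in>{..<r}-{k}. cmod (b k) * cmod (a h) * cmod (P k h)))"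
    by (intro sum.cong refl) (simp add: sum.remove)
  also have "\<dots> \<le> (\<Sum>k<r. cmod (b k) * cmod (a k) * D
      + (\<Sum>h\<in>{..<r}-{k}. cmod (b k) * cmod (a h) * E))"
    using diag offdiag by (intro sum_mono add_mono mult_left_mono) auto
  also have "\<dots> = D * (\<Sum>k<r. cmod (b k) * cmod (a k))
      + E * (\<Sum>k<r. \<Sum>h\<in>{..<r}-{k}. cmod (b k) * cmod (a h))"
    by (simp add: sum.distrib sum_distrib_left sum_distrib_right mult_ac)
  also have "\<dots> \<le> D * (?S / 2) + E * ((real r - 1) * ?S / 2)"
    using assms(3,4) sum_mult_le_sum_squares sum_offdiag_mult_le_sum_squares
    by (intro add_mono mult_left_mono) auto
  also have "\<dots> = (D + (real r - 1) * E) * ?S / 2"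
    by (simp add: field_simps)
  finally show ?thesis .
qed

subsection \<open>Coherences\<close>

lemma finite_mu_Y_set:
  fixes n :: "nat \<Rightarrow> nat" and y :: "nat \<Rightarrow> nat \<Rightarrow> nat \<Rightarrow> complex"
  shows "finite {cmod (vinner (n l) (y l k) (y l h)) | l k h. l < d \<and> k < r \<and> h < r \<and> k \<noteq> h}"
proof (rule finite_subset)
  show "{cmod (vinner (n l) (y l k) (y l h)) | l k h. l < d \<and> k < r \<and> h < r \<and> k \<noteq> h}
      \<subseteq> (\<lambda>(l, k, h). cmod (vinner (n l) (y l k) (y l h))) ` ({..<d} \<times> {..<r} \<times> {..<r})"
    by force
  show "finite ((\<lambda>(l, k, h). cmod (vinner (n l) (y l k) (y l h))) ` ({..<d} \<times> {..<r} \<times> {..<r}))"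
    by (intro finite_imageI finite_cartesian_product finite_lessThan)
qed

lemma finite_mu'_Y_set:
  fixes n :: "nat \<Rightarrow> nat" and y :: "nat \<Rightarrow> nat \<Rightarrow> nat \<Rightarrow> complex"
  shows "finite {(\<Prod>l<d. cmod (vinner (n l) (y l k) (y l h))) | k h. k < r \<and> h < r \<and> k \<noteq> h}"
proof (rule finite_subset)
  show "{(\<Prod>l<d. cmod (vinner (n l) (y l k) (y l h))) | k h. k < r \<and> h < r \<and> k \<noteq> h}
      \<subseteq> (\<lambda>(k, h). \<Prod>l<d. cmod (vinner (n l) (y l k) (y l h))) ` ({..<r} \<times> {..<r})"
    by force
  show "finite ((\<lambda>(k, h). \<Prod>l<d. cmod (vinner (n l) (y l k) (y l h))) ` ({..<r} \<times> {..<r}))"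
    by (intro finite_imageI finite_cartesian_product finite_lessThan)
qed

lemma mu_Y_nonneg: "0 \<le> mu_Y d n r y"
  unfolding mu_Y_def using finite_mu_Y_set by (intro Max_ge) auto

lemma norm_vinner_le_mu_Y:
  "l < d \<Longrightarrow> k < r \<Longrightarrow> h < r \<Longrightarrow> k \<noteq> h \<Longrightarrow> cmod (vinner (n l) (y l k) (y l h)) \<le> mu_Y d n r y"
  unfolding mu_Y_def using finite_mu_Y_set by (intro Max_ge) auto

lemma mu'_Y_nonneg: "0 \<le> mu'_Y d n r y"
  unfolding mu'_Y_def using finite_mu'_Y_set by (intro Max_ge) auto

lemma norm_prod_vinner_le_mu'_Y:
  "k < r \<Longrightarrow> h < r \<Longrightarrow> k \<noteq> h \<Longrightarrow> cmod (\<Prod>l<d. vinner (n l) (y l k) (y l h)) \<le> mu'_Y d n r y"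
  unfolding mu'_Y_def prod_norm[symmetric] using finite_mu'_Y_set by (intro Max_ge) auto

subsection \<open>Error of the sketched inner product\<close>

definition JL_eps' :: "nat \<Rightarrow> nat \<Rightarrow> real \<Rightarrow> real \<Rightarrow> real" where
  "JL_eps' d r \<epsilon> \<mu> = (if \<mu> = 0
     then (\<epsilon> + exp 1 * sqrt (real r * (real r - 1)) * \<epsilon> ^ d) * exp 1
     else \<epsilon> * (exp 1 + (exp 1)\<^sup>2 * sqrt (real r * (real r - 1)) * max (\<epsilon> ^ (d - 1)) (\<mu> ^ (d - 1))))"

lemma JL_eps'_eq:
  assumes "1 \<le> d" "0 < \<epsilon>" "0 \<le> \<mu>"
  shows "JL_eps' d r \<epsilon> \<mu> = \<epsilon> * exp 1 + (exp 1)\<^sup>2 * sqrt (real r * (real r - 1)) * \<epsilon> * max \<epsilon> \<mu> ^ (d - 1)"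
proof (cases "\<mu> = 0")
  case True
  have "\<epsilon> ^ d = \<epsilon> * \<epsilon> ^ (d - 1)"
    using assms(1) by (simp add: power_eq_if)
  then show ?thesis
    using True assms(2) by (simp add: JL_eps'_def algebra_simps power2_eq_square)
next
  case False
  have "max (\<epsilon> ^ (d - 1)) (\<mu> ^ (d - 1)) = max \<epsilon> \<mu> ^ (d - 1)"
    using assms(2,3) by (auto simp: max_def power_mono le_max_iff_disj intro: antisym)
  then show ?thesis
    using False by (simp add: JL_eps'_def algebra_simps)
qed

lemma JL_error_constant_le_JL_eps':
  assumes "1 \<le> d" "0 < \<epsilon>" "0 \<le> \<mu>"
  shows "\<epsilon> / 2 * exp 1 + (real r - 1) * (\<epsilon> / 2 * exp 1 * max \<epsilon> \<mu> ^ (d - 1)) \<le> JL_eps' d r \<epsilon> \<mu>"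
proof -
  let ?R = "sqrt (real r * (real r - 1))" and ?q = "\<epsilon> * exp 1 * max \<epsilon> \<mu> ^ (d - 1)"
  have "real r - 1 \<le> ?R"
  proof (cases r)
    case (Suc r')
    then show ?thesis by (intro real_le_rsqrt) (simp add: power2_eq_square mult_right_mono)
  qed simp
  moreover have "0 \<le> ?R"
    by (cases r) auto
  moreover have "0 \<le> ?q"
    using assms by simp
  then have "?q / 2 \<le> exp 1 * ?q"
    using mult_right_mono[of 1 "exp 1" ?q] by simp
  ultimately have "(real r - 1) * (?q / 2) \<le> ?R * (exp 1 * ?q)"
    using \<open>0 \<le> ?q\<close> by (intro mult_mono) auto
  then have "\<epsilon> / 2 * exp 1 + (real r - 1) * (?q / 2) \<le> \<epsilon> * exp 1 + ?R * (exp 1 * ?q)"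
    using assms(2) by (intro add_mono) auto
  also have "\<dots> = JL_eps' d r \<epsilon> \<mu>"
    using assms by (simp add: JL_eps'_eq power2_eq_square mult_ac)
  finally show ?thesis
    by simp
qed

lemma JL_eps'_nonneg:
  assumes "1 \<le> d" "0 < \<epsilon>" "0 \<le> \<mu>"
  shows "0 \<le> JL_eps' d r \<epsilon> \<mu>"
proof -
  have "0 \<le> real r * (real r - 1)"
    by (cases r) auto
  then show ?thesis
    using assms by (simp add: JL_eps'_eq)
qed

lemma prod_gram_JL_error:
  fixes n m :: "nat \<Rightarrow> nat"
  assumes d_pos: "1 \<le> d"
    and std: "\<And>l k. l < d \<Longrightarrow> k < r \<Longrightarrow> vnorm2 (n l) (y l k) = 1"
    and eps: "0 < \<epsilon>" "\<epsilon> \<le> 2"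
    and JL: "\<And>j. j < d \<Longrightarrow> is_JL (\<epsilon> / (4 * real d)) (m j) (n j) (A j) (S_prime r (y j))"
    and kh: "k < r" "h < r"
  shows "cmod ((\<Prod>l<d. vinner (m l) (mat_vec (n l) (A l) (y l k)) (mat_vec (n l) (A l) (y l h)))
              - (\<Prod>l<d. vinner (n l) (y l k) (y l h)))
    \<le> \<epsilon> / 2 * exp 1 * (if k = h then 1 else max \<epsilon> (mu_Y d n r y) ^ (d - 1))"
proof -
  define \<eta> where "\<eta> = (\<epsilon> / 2) / real d"
  let ?\<mu> = "mu_Y d n r y"
  have d_\<eta>: "real d * \<eta> = \<epsilon> / 2" and "0 \<le> \<eta>"
    using d_pos eps unfolding \<eta>_def by auto
  have err: "cmod (vinner (m l) (mat_vec (n l) (A l) (y l k)) (mat_vec (n l) (A l) (y l h))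
      - vinner (n l) (y l k) (y l h)) \<le> \<eta>" if "l < d" for l
    using S_prime_gram_error[OF JL[OF that] std[OF that] kh] unfolding \<eta>_def by simp
  show ?thesis
  proof (cases "k = h")
    case True
    have "vinner (n l) (y l k) (y l h) = 1" if "l < d" for l
      using True std[OF that kh(1)] by (simp add: vinner_self)
    then have "cmod ((\<Prod>l<d. vinner (m l) (mat_vec (n l) (A l) (y l k)) (mat_vec (n l) (A l) (y l h)))
              - (\<Prod>l<d. vinner (n l) (y l k) (y l h))) \<le> real d * \<eta> * (1 + \<eta>) ^ (d - 1)"
      using err \<open>0 \<le> \<eta>\<close> by (intro norm_prod_diff_le) auto
    also have "\<dots> \<le> real d * \<eta> * exp 1"
    proof (intro mult_left_mono)
      show "(1 + \<eta>) ^ (d - 1) \<le> exp 1"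
        using power_add_divide_le_exp_max[of 1 "\<epsilon> / 2" d] eps unfolding \<eta>_def by simp
    qed (use \<open>0 \<le> \<eta>\<close> in simp)
    finally show ?thesis
      using True d_\<eta> by simp
  next
    case False
    have "cmod ((\<Prod>l<d. vinner (m l) (mat_vec (n l) (A l) (y l k)) (mat_vec (n l) (A l) (y l h)))
              - (\<Prod>l<d. vinner (n l) (y l k) (y l h))) \<le> real d * \<eta> * (?\<mu> + \<eta>) ^ (d - 1)"
      using err \<open>0 \<le> \<eta>\<close> False kh norm_vinner_le_mu_Y mu_Y_nonneg by (intro norm_prod_diff_le) auto
    also have "\<dots> \<le> real d * \<eta> * (exp 1 * max \<epsilon> ?\<mu> ^ (d - 1))"
    proof (intro mult_left_mono)
      have "(?\<mu> + \<eta>) ^ (d - 1) \<le> exp 1 * max ?\<mu> (\<epsilon> / 2) ^ (d - 1)"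
        unfolding \<eta>_def using eps mu_Y_nonneg by (intro power_add_divide_le_exp_max) auto
      also have "max ?\<mu> (\<epsilon> / 2) ^ (d - 1) \<le> max \<epsilon> ?\<mu> ^ (d - 1)"
        using eps mu_Y_nonneg by (intro power_mono) auto
      finally show "(?\<mu> + \<eta>) ^ (d - 1) \<le> exp 1 * max \<epsilon> ?\<mu> ^ (d - 1)"
        by simp
    qed (use \<open>0 \<le> \<eta>\<close> in simp)
    also have "\<dots> = \<epsilon> / 2 * exp 1 * max \<epsilon> ?\<mu> ^ (d - 1)"
      unfolding d_\<eta> by (simp only: mult.assoc)
    finally show ?thesis
      using False by simp
  qed
qed

lemma cp_tensor_JL_inner_error:
  fixes n m :: "nat \<Rightarrow> nat"
  assumes d_pos: "1 \<le> d"
    and std: "\<And>l k. l < d \<Longrightarrow> k < r \<Longrightarrow> vnorm2 (n l) (y l k) = 1"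
    and eps: "0 < \<epsilon>" "\<epsilon> \<le> 2"
    and JL: "\<And>j. j < d \<Longrightarrow> is_JL (\<epsilon> / (4 * real d)) (m j) (n j) (A j) (S_prime r (y j))"
  shows "cmod (tinner d m (multi_mode_prod n A d (cp_tensor d r \<beta> y)) (multi_mode_prod n A d (cp_tensor d r \<alpha> y))
                - tinner d n (cp_tensor d r \<beta> y) (cp_tensor d r \<alpha> y))
    \<le> (\<epsilon> / 2 * exp 1 + (real r - 1) * (\<epsilon> / 2 * exp 1 * max \<epsilon> (mu_Y d n r y) ^ (d - 1)))
       * ((\<Sum>k<r. (cmod (\<beta> k))\<^sup>2) + (\<Sum>k<r. (cmod (\<alpha> k))\<^sup>2)) / 2"
proof -
  let ?GA = "\<lambda>k h. \<Prod>l<d. vinner (m l) (mat_vec (n l) (A l) (y l k)) (mat_vec (n l) (A l) (y l h))"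
  let ?G = "\<lambda>k h. \<Prod>l<d. vinner (n l) (y l k) (y l h)"
  have diff_eq: "tinner d m (multi_mode_prod n A d (cp_tensor d r \<beta> y)) (multi_mode_prod n A d (cp_tensor d r \<alpha> y))
        - tinner d n (cp_tensor d r \<beta> y) (cp_tensor d r \<alpha> y)
      = (\<Sum>k<r. \<Sum>h<r. \<beta> k * cnj (\<alpha> h) * (?GA k h - ?G k h))"
    by (simp add: multi_mode_prod_cp_tensor tinner_cp_tensor sum_subtractf right_diff_distrib)
  show ?thesis
    unfolding diff_eq
  proof (rule norm_bilinear_sum_le)
    show "cmod (?GA k k - ?G k k) \<le> \<epsilon> / 2 * exp 1" if "k < r" for k
      using prod_gram_JL_error[OF d_pos std eps JL that that] by simp
    show "cmod (?GA k h - ?G k h) \<le> \<epsilon> / 2 * exp 1 * max \<epsilon> (mu_Y d n r y) ^ (d - 1)"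
      if "k < r" "h < r" "k \<noteq> h" for k h
      using prod_gram_JL_error[OF d_pos std eps JL that(1,2)] that(3) by simp
  qed (use eps mu_Y_nonneg in auto)
qed

lemma tnorm2_eq_Re_tinner: "tnorm2 d N Z = Re (tinner d N Z Z)"
  unfolding tinner_def tnorm2_def by (simp add: complex_norm_square[symmetric] Re_sum)

lemma cp_tensor_tnorm2_ge:
  assumes std: "\<And>l k. l < d \<Longrightarrow> k < r \<Longrightarrow> vnorm2 (n l) (y l k) = 1"
  shows "(1 - (real r - 1) * mu'_Y d n r y) * (\<Sum>k<r. (cmod (b k))\<^sup>2) \<le> tnorm2 d n (cp_tensor d r b y)"
proof -
  let ?S = "\<Sum>k<r. (cmod (b k))\<^sup>2"
  define P where "P k h = (\<Prod>l<d. vinner (n l) (y l k) (y l h)) - (if k = h then 1 else 0)" for k h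
  have diag: "P k k = 0" if "k < r" for k
    using std[OF _ that] by (simp add: P_def vinner_self)
  have "tinner d n (cp_tensor d r b y) (cp_tensor d r b y)
      = (\<Sum>k<r. \<Sum>h<r. b k * cnj (b h) * ((if k = h then 1 else 0) + P k h))"
    unfolding tinner_cp_tensor P_def by simp
  also have "\<dots> = (\<Sum>k<r. \<Sum>h<r. b k * cnj (b h) * (if k = h then 1 else 0))
        + (\<Sum>k<r. \<Sum>h<r. b k * cnj (b h) * P k h)"
    by (simp add: distrib_left sum.distrib)
  also have "(\<Sum>k<r. \<Sum>h<r. b k * cnj (b h) * (if k = h then 1 else 0)) = (\<Sum>k<r. b k * cnj (b k))"
    by (intro sum.cong refl) (simp add: if_distrib cong: if_cong)
  also have "\<dots> = complex_of_real ?S"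
    by (simp only: of_real_sum complex_norm_square)
  finally have "tnorm2 d n (cp_tensor d r b y) = ?S + Re (\<Sum>k<r. \<Sum>h<r. b k * cnj (b h) * P k h)"
    by (simp add: tnorm2_eq_Re_tinner)
  moreover have "cmod (\<Sum>k<r. \<Sum>h<r. b k * cnj (b h) * P k h) \<le> (0 + (real r - 1) * mu'_Y d n r y) * (?S + ?S) / 2"
    using diag norm_prod_vinner_le_mu'_Y mu'_Y_nonneg by (intro norm_bilinear_sum_le) (auto simp: P_def)
  moreover have "- cmod (\<Sum>k<r. \<Sum>h<r. b k * cnj (b h) * P k h) \<le> Re (\<Sum>k<r. \<Sum>h<r. b k * cnj (b h) * P k h)"
    using abs_Re_le_cmod[of "\<Sum>k<r. \<Sum>h<r. b k * cnj (b h) * P k h"] by linarith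
  ultimately show ?thesis
    by (simp add: algebra_simps)
qed

lemma max_sum_squares_le_tnorm2:
  assumes std: "\<And>l k. l < d \<Longrightarrow> k < r \<Longrightarrow> vnorm2 (n l) (y l k) = 1"
    and coh: "(real r - 1) * mu'_Y d n r y < 1"
  shows "max (\<Sum>k<r. (cmod (\<beta> k))\<^sup>2) (\<Sum>k<r. (cmod (\<alpha> k))\<^sup>2)
    \<le> max (tnorm2 d n (cp_tensor d r \<beta> y)) (tnorm2 d n (cp_tensor d r \<alpha> y)) / (1 - (real r - 1) * mu'_Y d n r y)"
proof -
  let ?c = "1 - (real r - 1) * mu'_Y d n r y"
  have lower: "(\<Sum>k<r. (cmod (b k))\<^sup>2) \<le> tnorm2 d n (cp_tensor d r b y) / ?c" for b
    using cp_tensor_tnorm2_ge[OF std, where b = b] coh by (simp add: pos_le_divide_eq mult.commute)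
  have upper: "tnorm2 d n (cp_tensor d r b y) / ?c
      \<le> max (tnorm2 d n (cp_tensor d r \<beta> y)) (tnorm2 d n (cp_tensor d r \<alpha> y)) / ?c"
    if "b = \<beta> \<or> b = \<alpha>" for b
    using that coh by (intro divide_right_mono) auto
  show ?thesis
    using order.trans[OF lower upper[OF disjI1[OF refl]]] order.trans[OF lower upper[OF disjI2[OF refl]]]
    by (rule max.boundedI)
qed

theorem corollary1:
  fixes d r :: nat and n m :: "nat \<Rightarrow> nat"
    and y :: "nat \<Rightarrow> nat \<Rightarrow> nat \<Rightarrow> complex"
    and \<alpha> \<beta> :: "nat \<Rightarrow> complex"
    and A :: "nat \<Rightarrow> nat \<Rightarrow> nat \<Rightarrow> complex"
    and \<epsilon> \<epsilon>' :: real
  assumes d_pos: "d \<ge> 1"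
    and std: "\<And>l k. l < d \<Longrightarrow> k < r \<Longrightarrow> vnorm2 (n l) (y l k) = 1"
    and eps: "0 < \<epsilon>" "\<epsilon> \<le> 3/4"
    and JL: "\<And>j. j < d \<Longrightarrow> is_JL (\<epsilon> / (4 * real d)) (m j) (n j) (A j) (S_prime r (y j))"
    and eps'_def: "\<epsilon>' = (if mu_Y d n r y = 0
        then (\<epsilon> + exp 1 * sqrt (real r * (real r - 1)) * \<epsilon> ^ d) * exp 1
        else \<epsilon> * (exp 1 + (exp 1)\<^sup>2 * sqrt (real r * (real r - 1))
                 * max (\<epsilon> ^ (d - 1)) ((mu_Y d n r y) ^ (d - 1))))"
  defines "X \<equiv> cp_tensor d r \<beta> y"
    and "Y \<equiv> cp_tensor d r \<alpha> y"
    and "nb \<equiv> (\<Sum>k<r. (cmod (\<beta> k))\<^sup>2)"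
    and "na \<equiv> (\<Sum>k<r. (cmod (\<alpha> k))\<^sup>2)"
  shows "cmod (tinner d m (multi_mode_prod n A d X) (multi_mode_prod n A d Y) - tinner d n X Y)
           \<le> 2 * \<epsilon>' * (nb + na)
         \<and> 2 * \<epsilon>' * (nb + na) \<le> 4 * \<epsilon>' * max nb na
         \<and> ((real r - 1) * mu'_Y d n r y < 1 \<longrightarrow>
              4 * \<epsilon>' * max nb na
                \<le> 4 * \<epsilon>' * max (tnorm2 d n X) (tnorm2 d n Y) / (1 - (real r - 1) * mu'_Y d n r y))"
proof -
  have eps': "\<epsilon>' = JL_eps' d r \<epsilon> (mu_Y d n r y)"
    unfolding eps'_def JL_eps'_def ..
  have "0 \<le> \<epsilon>'"
    unfolding eps' using d_pos eps by (intro JL_eps'_nonneg mu_Y_nonneg)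
  have "0 \<le> nb + na"
    unfolding nb_def na_def by (simp add: sum_nonneg)
  have "cmod (tinner d m (multi_mode_prod n A d X) (multi_mode_prod n A d Y) - tinner d n X Y)
      \<le> (\<epsilon> / 2 * exp 1 + (real r - 1) * (\<epsilon> / 2 * exp 1 * max \<epsilon> (mu_Y d n r y) ^ (d - 1))) * (nb + na) / 2"
    unfolding X_def Y_def nb_def na_def using eps by (intro cp_tensor_JL_inner_error d_pos std JL) auto
  also have "\<dots> \<le> \<epsilon>' * (nb + na) / 2"
    unfolding eps' using d_pos eps mu_Y_nonneg \<open>0 \<le> nb + na\<close>
    by (intro divide_right_mono mult_right_mono JL_error_constant_le_JL_eps') auto
  also have "\<dots> \<le> 2 * \<epsilon>' * (nb + na)"
    using \<open>0 \<le> \<epsilon>'\<close> \<open>0 \<le> nb + na\<close> by simp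
  finally have "cmod (tinner d m (multi_mode_prod n A d X) (multi_mode_prod n A d Y) - tinner d n X Y)
      \<le> 2 * \<epsilon>' * (nb + na)" .
  moreover have "2 * \<epsilon>' * (nb + na) \<le> 4 * \<epsilon>' * max nb na"
    using \<open>0 \<le> \<epsilon>'\<close> mult_left_mono[of "nb + na" "2 * max nb na" "2 * \<epsilon>'"] by simp
  moreover have "4 * \<epsilon>' * max nb na
      \<le> 4 * \<epsilon>' * max (tnorm2 d n X) (tnorm2 d n Y) / (1 - (real r - 1) * mu'_Y d n r y)"
    if "(real r - 1) * mu'_Y d n r y < 1"
    using mult_left_mono[OF max_sum_squares_le_tnorm2[OF std that, where \<beta> = \<beta> and \<alpha> = \<alpha>], of "4 * \<epsilon>'"]
      \<open>0 \<le> \<epsilon>'\<close>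
    unfolding X_def Y_def nb_def na_def by simp
  ultimately show ?thesis
    by blast
qed

end
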